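(* Let $N_k=N\cup\{\Gamma\rightarrow E[x]_{p,q}\}$ and $N_{k+1}=N\cup\{\Gamma\{x\mapsto x'\},\Gamma\rightarrow E[x']_q\}$ be obtained by a Linear transformation. Let $N^\bot_{k+1}$ be a conflicting core of $N_{k+1}$, and let $(\Gamma\{x\mapsto x'\},\Gamma\rightarrow E[x']_q)\sigma_j$, $1\le j\le m$, be the clauses of $N^\bot_{k+1}$ that are instances of $\Gamma\{x\mapsto x'\},\Gamma\rightarrow E[x']_q$. If $x\sigma_j=x'\sigma_j$ for all $1\le j\le m$, then $$\big(N^\bot_{k+1}\setminus\{(\Gamma\{x\mapsto x'\},\Gamma\rightarrow E[x']_q)\sigma_j\mid 1\le j\le m\}\big)\cup\{(\Gamma\rightarrow E[x]_{p,q})\sigma_j\mid 1\le j\le m\}$$ is a conflicting core of $N_k$.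
   Context: First-order logic without equality. A clause is a finite multiset of literals written $\Gamma \rightarrow \Delta$. A Herbrand interpretation is a set of ground atoms; $I \models \Gamma\rightarrow\Delta$ iff for every grounding substitution $\sigma$, $\Delta\sigma\cap I\neq\emptyset$ or $\Gamma\sigma\not\subseteq I$. $E[x]_{p,q}$ denotes an atom with occurrences of variable $x$ at two different positions $p,q$, and $E[x']_q$ the atom obtained by replacing the occurrence at $q$ by $x'$. Linear transformation: $N\cup\{\Gamma\rightarrow E[x]_{p,q}\}\Rightarrow N\cup\{\Gamma\{x\mapsto x'\},\Gamma\rightarrow E[x']_q\}$ with $x'$ a fresh variable. A finite clause set $N^\bot$ is a conflicting core if for every substitution $\tau$ grounding all of $N^\bot$ (one substitution for the whole set, so variables are shared among clauses) the set $N^\bot\tau$ is unsatisfiable. $N^\bot$ is a conflicting core of $N$ if moreover every $C\in N^\bot$ equals $C'\sigma$ for some $C'\in N$ and substitution $\sigma$. *)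

theory Defs
  imports Main "HOL-Library.Multiset"
begin

datatype ('f, 'v) trm = Var 'v | Fun 'f "('f, 'v) trm list"

datatype ('p, 'f, 'v) atm = Atom 'p "('f, 'v) trm list"

text \<open>A clause Gamma -> Delta: a pair of finite multisets of atoms (antecedent, succedent).\<close>
type_synonym ('p, 'f, 'v) cls = "('p, 'f, 'v) atm multiset \<times> ('p, 'f, 'v) atm multiset"

type_synonym ('f, 'v) subst = "'v \<Rightarrow> ('f, 'v) trm"

fun vars_trm :: "('f, 'v) trm \<Rightarrow> 'v set" where
  "vars_trm (Var x) = {x}"
| "vars_trm (Fun f ts) = (\<Union>t\<in>set ts. vars_trm t)"

definition vars_atm :: "('p, 'f, 'v) atm \<Rightarrow> 'v set" where
  "vars_atm A = (case A of Atom P ts \<Rightarrow> (\<Union>t\<in>set ts. vars_trm t))"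

definition vars_cls :: "('p, 'f, 'v) cls \<Rightarrow> 'v set" where
  "vars_cls C = (\<Union>A\<in>set_mset (fst C) \<union> set_mset (snd C). vars_atm A)"

fun subst_trm :: "('f, 'v) subst \<Rightarrow> ('f, 'v) trm \<Rightarrow> ('f, 'v) trm" where
  "subst_trm \<sigma> (Var x) = \<sigma> x"
| "subst_trm \<sigma> (Fun f ts) = Fun f (map (subst_trm \<sigma>) ts)"

definition subst_atm :: "('f, 'v) subst \<Rightarrow> ('p, 'f, 'v) atm \<Rightarrow> ('p, 'f, 'v) atm" where
  "subst_atm \<sigma> A = (case A of Atom P ts \<Rightarrow> Atom P (map (subst_trm \<sigma>) ts))"

definition subst_cls :: "('f, 'v) subst \<Rightarrow> ('p, 'f, 'v) cls \<Rightarrow> ('p, 'f, 'v) cls" where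
  "subst_cls \<sigma> C = (image_mset (subst_atm \<sigma>) (fst C), image_mset (subst_atm \<sigma>) (snd C))"

definition ground_trm :: "('f, 'v) trm \<Rightarrow> bool" where
  "ground_trm t \<longleftrightarrow> vars_trm t = {}"

definition ground_atm :: "('p, 'f, 'v) atm \<Rightarrow> bool" where
  "ground_atm A \<longleftrightarrow> vars_atm A = {}"

definition grounding :: "('f, 'v) subst \<Rightarrow> ('p, 'f, 'v) cls \<Rightarrow> bool" where
  "grounding \<sigma> C \<longleftrightarrow> (\<forall>x\<in>vars_cls C. ground_trm (\<sigma> x))"

definition models :: "('p, 'f, 'v) atm set \<Rightarrow> ('p, 'f, 'v) cls \<Rightarrow> bool" where
  "models I C \<longleftrightarrow> (\<forall>\<sigma>. grounding \<sigma> C \<longrightarrow>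
      set_mset (image_mset (subst_atm \<sigma>) (snd C)) \<inter> I \<noteq> {}
    \<or> \<not> set_mset (image_mset (subst_atm \<sigma>) (fst C)) \<subseteq> I)"

definition satisfiable :: "('p, 'f, 'v) cls set \<Rightarrow> bool" where
  "satisfiable N \<longleftrightarrow> (\<exists>I. (\<forall>A\<in>I. ground_atm A) \<and> (\<forall>C\<in>N. models I C))"

definition conflicting_core :: "('p, 'f, 'v) cls set \<Rightarrow> bool" where
  "conflicting_core Nb \<longleftrightarrow> finite Nb \<and>
     (\<forall>\<tau>. (\<forall>C\<in>Nb. grounding \<tau> C) \<longrightarrow> \<not> satisfiable (subst_cls \<tau> ` Nb))"

definition conflicting_core_of :: "('p, 'f, 'v) cls set \<Rightarrow> ('p, 'f, 'v) cls set \<Rightarrow> bool" where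
  "conflicting_core_of Nb N \<longleftrightarrow> conflicting_core Nb \<and>
     (\<forall>C\<in>Nb. \<exists>C'\<in>N. \<exists>\<sigma>. C = subst_cls \<sigma> C')"

type_synonym pos = "nat list"

fun trm_at :: "('f, 'v) trm \<Rightarrow> pos \<Rightarrow> ('f, 'v) trm option" where
  "trm_at t [] = Some t"
| "trm_at (Var x) (i # p) = None"
| "trm_at (Fun f ts) (i # p) = (if i < length ts then trm_at (ts ! i) p else None)"

text \<open>Positions in an atom: the first index selects the argument of the predicate.\<close>
fun atm_at :: "('p, 'f, 'v) atm \<Rightarrow> pos \<Rightarrow> ('f, 'v) trm option" where
  "atm_at (Atom P ts) [] = None"
| "atm_at (Atom P ts) (i # p) = (if i < length ts then trm_at (ts ! i) p else None)"

fun trm_repl :: "('f, 'v) trm \<Rightarrow> pos \<Rightarrow> ('f, 'v) trm \<Rightarrow> ('f, 'v) trm" where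
  "trm_repl t [] s = s"
| "trm_repl (Var x) (i # p) s = Var x"
| "trm_repl (Fun f ts) (i # p) s =
     (if i < length ts then Fun f (ts[i := trm_repl (ts ! i) p s]) else Fun f ts)"

fun atm_repl :: "('p, 'f, 'v) atm \<Rightarrow> pos \<Rightarrow> ('f, 'v) trm \<Rightarrow> ('p, 'f, 'v) atm" where
  "atm_repl (Atom P ts) [] s = Atom P ts"
| "atm_repl (Atom P ts) (i # p) s =
     (if i < length ts then Atom P (ts[i := trm_repl (ts ! i) p s]) else Atom P ts)"

end

theory Submission
  imports Defs
begin

text \<open>If x\<sigma> = x'\<sigma>, the instance under \<sigma> of the linearized clause
  \<Gamma>{x \<mapsto> x'}, \<Gamma> \<rightarrow> E[x']_q and that of the original clause \<Gamma> \<rightarrow> E[x]_{p,q} differ only in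
  the multiplicities of their antecedent atoms. Variables, groundings and truth of a clause depend
  only on its sets of atoms, so swapping these instances in the core changes none of its ground
  instances up to such multiplicities, and unsatisfiability is preserved.\<close>

lemma subst_trm_comp: "subst_trm \<sigma> (subst_trm \<rho> t) = subst_trm (subst_trm \<sigma> \<circ> \<rho>) t"
  by (induction t) auto

lemma subst_atm_comp: "subst_atm \<sigma> (subst_atm \<rho> A) = subst_atm (subst_trm \<sigma> \<circ> \<rho>) A"
  by (cases A) (simp add: subst_atm_def subst_trm_comp)

lemma subst_comp_rename_eq:
  assumes "\<sigma> x' = \<sigma> x"
  shows "subst_trm \<sigma> \<circ> Var(x := Var x') = \<sigma>"
  using assms by auto

lemma subst_trm_repl_Var:
  assumes "trm_at t q = Some (Var x)" and "\<sigma> x' = \<sigma> x"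
  shows "subst_trm \<sigma> (trm_repl t q (Var x')) = subst_trm \<sigma> t"
  using assms(1)
proof (induction q arbitrary: t)
  case Nil
  then show ?case using assms(2) by auto
next
  case (Cons i p)
  then obtain f ts where t: "t = Fun f ts" and i: "i < length ts"
    by (cases t) (auto split: if_splits)
  with Cons have "subst_trm \<sigma> (trm_repl (ts ! i) p (Var x')) = subst_trm \<sigma> (ts ! i)"
    by auto
  with t i show ?case
    by (simp add: map_update) (metis list_update_id nth_map)
qed

lemma subst_atm_repl_Var:
  assumes "atm_at E q = Some (Var x)" and "\<sigma> x' = \<sigma> x"
  shows "subst_atm \<sigma> (atm_repl E q (Var x')) = subst_atm \<sigma> E"
proof -
  obtain P ts where E: "E = Atom P ts" by (cases E)
  obtain i p where q: "q = i # p" and i: "i < length ts" and at: "trm_at (ts ! i) p = Some (Var x)"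
    using assms(1) E by (cases q) (auto split: if_splits)
  have "subst_trm \<sigma> (trm_repl (ts ! i) p (Var x')) = subst_trm \<sigma> (ts ! i)"
    using subst_trm_repl_Var[OF at assms(2)] .
  with E q i show ?thesis
    by (simp add: subst_atm_def map_update) (metis list_update_id nth_map)
qed

definition same_atoms :: "('p, 'f, 'v) cls \<Rightarrow> ('p, 'f, 'v) cls \<Rightarrow> bool" where
  "same_atoms C D \<longleftrightarrow> set_mset (fst C) = set_mset (fst D) \<and> set_mset (snd C) = set_mset (snd D)"

lemma same_atoms_vars_cls: "same_atoms C D \<Longrightarrow> vars_cls C = vars_cls D"
  by (simp add: same_atoms_def vars_cls_def)

lemma same_atoms_grounding: "same_atoms C D \<Longrightarrow> grounding \<tau> C = grounding \<tau> D"
  by (simp add: grounding_def same_atoms_vars_cls)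

lemma same_atoms_models: "same_atoms C D \<Longrightarrow> models I C = models I D"
  by (simp add: models_def same_atoms_grounding) (simp add: same_atoms_def)

lemma same_atoms_subst_cls: "same_atoms C D \<Longrightarrow> same_atoms (subst_cls \<tau> C) (subst_cls \<tau> D)"
  by (simp add: same_atoms_def subst_cls_def)

lemma conflicting_core_if_same_atoms_cover:
  assumes core: "conflicting_core Nb" and "finite M"
    and cover: "\<forall>D\<in>Nb. \<exists>D'\<in>M. same_atoms D D'"
  shows "conflicting_core M"
  unfolding conflicting_core_def
proof (intro conjI allI impI)
  show "finite M" by fact
next
  fix \<tau> assume ground_M: "\<forall>D'\<in>M. grounding \<tau> D'"
  have "\<forall>D\<in>Nb. grounding \<tau> D"
    using cover ground_M same_atoms_grounding by metis
  then have unsat: "\<not> satisfiable (subst_cls \<tau> ` Nb)"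
    using core by (simp add: conflicting_core_def)
  show "\<not> satisfiable (subst_cls \<tau> ` M)"
  proof
    assume "satisfiable (subst_cls \<tau> ` M)"
    then obtain I where I_ground: "\<forall>A\<in>I. ground_atm A"
      and I_models: "\<forall>D'\<in>M. models I (subst_cls \<tau> D')"
      by (auto simp: satisfiable_def)
    have "\<forall>D\<in>Nb. models I (subst_cls \<tau> D)"
      using cover I_models same_atoms_models same_atoms_subst_cls by metis
    with I_ground unsat show False
      by (auto simp: satisfiable_def)
  qed
qed

lemma same_atoms_refl: "same_atoms C C"
  by (simp add: same_atoms_def)

lemma conflicting_core_replace_same_atoms:
  assumes "conflicting_core Nb" and "finite T"
    and "\<forall>D\<in>S. \<exists>D'\<in>T. same_atoms D D'"
  shows "conflicting_core ((Nb - S) \<union> T)"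
proof (rule conflicting_core_if_same_atoms_cover[OF assms(1)])
  show "finite ((Nb - S) \<union> T)"
    using assms(1,2) by (simp add: conflicting_core_def)
  show "\<forall>D\<in>Nb. \<exists>D'\<in>(Nb - S) \<union> T. same_atoms D D'"
    using assms(3) same_atoms_refl by blast
qed

lemma same_atoms_subst_linearized:
  assumes "atm_at E q = Some (Var x)" and "\<sigma> x = \<sigma> x'"
  shows "same_atoms
           (subst_cls \<sigma> (image_mset (subst_atm (Var(x := Var x'))) \<Gamma> + \<Gamma>, {#atm_repl E q (Var x')#}))
           (subst_cls \<sigma> (\<Gamma>, {#E#}))"
proof -
  have "subst_atm \<sigma> \<circ> subst_atm (Var(x := Var x')) = subst_atm \<sigma>"
    using subst_comp_rename_eq[of \<sigma> x' x] assms(2) by (auto simp: subst_atm_comp)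
  then have "image_mset (subst_atm \<sigma>) (image_mset (subst_atm (Var(x := Var x'))) \<Gamma>)
      = image_mset (subst_atm \<sigma>) \<Gamma>"
    by (metis multiset.map_comp)
  then show ?thesis
    using subst_atm_repl_Var[OF assms(1)] assms(2)
    by (simp add: same_atoms_def subst_cls_def)
qed

theorem lemma8:
  fixes N Nb :: "('p, 'f, 'v) cls set"
    and \<Gamma> :: "('p, 'f, 'v) atm multiset"
    and E :: "('p, 'f, 'v) atm"
    and x x' :: 'v and p q :: pos
    and \<sigma> :: "nat \<Rightarrow> ('f, 'v) subst" and m :: nat
  assumes "p \<noteq> q"
    and "atm_at E p = Some (Var x)" and "atm_at E q = Some (Var x)"
    and "x' \<notin> vars_cls (\<Gamma>, {#E#})"
    and "conflicting_core_of Nb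
           (N \<union> {(image_mset (subst_atm (Var(x := Var x'))) \<Gamma> + \<Gamma>, {#atm_repl E q (Var x')#})})"
    and "{C \<in> Nb. \<exists>\<tau>. C = subst_cls \<tau>
             (image_mset (subst_atm (Var(x := Var x'))) \<Gamma> + \<Gamma>, {#atm_repl E q (Var x')#})}
         = {subst_cls (\<sigma> j)
             (image_mset (subst_atm (Var(x := Var x'))) \<Gamma> + \<Gamma>, {#atm_repl E q (Var x')#})
            | j. 1 \<le> j \<and> j \<le> m}"
    and "\<forall>j. 1 \<le> j \<and> j \<le> m \<longrightarrow> \<sigma> j x = \<sigma> j x'"
  shows "conflicting_core_of
           ((Nb - {subst_cls (\<sigma> j)
                     (image_mset (subst_atm (Var(x := Var x'))) \<Gamma> + \<Gamma>, {#atm_repl E q (Var x')#})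
                   | j. 1 \<le> j \<and> j \<le> m})
            \<union> {subst_cls (\<sigma> j) (\<Gamma>, {#E#}) | j. 1 \<le> j \<and> j \<le> m})
           (N \<union> {(\<Gamma>, {#E#})})"
proof -
  define C' where "C' = (image_mset (subst_atm (Var(x := Var x'))) \<Gamma> + \<Gamma>, {#atm_repl E q (Var x')#})"
  define C where "C = (\<Gamma>, {#E#})"
  define S where "S = {subst_cls (\<sigma> j) C' | j. 1 \<le> j \<and> j \<le> m}"
  define T where "T = {subst_cls (\<sigma> j) C | j. 1 \<le> j \<and> j \<le> m}"
  have core: "conflicting_core Nb" and inst: "\<forall>D\<in>Nb. \<exists>C''\<in>N \<union> {C'}. \<exists>\<rho>. D = subst_cls \<rho> C''"
    using assms(5) by (simp_all add: conflicting_core_of_def C'_def)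
  have S_eq: "{D \<in> Nb. \<exists>\<tau>. D = subst_cls \<tau> C'} = S"
    using assms(6) by (simp add: C'_def S_def)
  have "T = (\<lambda>j. subst_cls (\<sigma> j) C) ` {1..m}" by (auto simp: T_def)
  then have "finite T" by simp
  moreover have "\<forall>D\<in>S. \<exists>D'\<in>T. same_atoms D D'"
    using same_atoms_subst_linearized[OF assms(3)] assms(7)
    unfolding S_def T_def C'_def C_def by blast
  ultimately have "conflicting_core ((Nb - S) \<union> T)"
    using core by (blast intro: conflicting_core_replace_same_atoms)
  moreover have "\<forall>D\<in>(Nb - S) \<union> T. \<exists>C''\<in>N \<union> {C}. \<exists>\<rho>. D = subst_cls \<rho> C''"
    using inst S_eq unfolding T_def by blast
  ultimately show ?thesis
    by (simp add: conflicting_core_of_def S_def T_def C'_def C_def)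
qed

end
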